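(* Let $\lambda>0$ be a scalar and let $T\mathcal{S}^3=\{(q,p)\in\mathbb{R}^4\times\mathbb{R}^4:\ \|q\|=1,\ q^Tp=0\}$. Define the binary operation, for $g_1=(q_1,p_1)$, $g_2=(q_2,p_2)\in T\mathcal{S}^3$, $$g_1\cdot g_2=\Big(Q(q_1)q_2,\ Q(q_1)p_2+W(q_2)p_1+\lambda Q(q_1)\big(q_{0,2}q_2-\bar 1\big)+\lambda W(q_2)\big(q_{0,1}q_1-\bar 1\big)-\lambda\big(q_{0,12}\,Q(q_1)q_2-\bar 1\big)\Big),$$ where $q_{0,i}$ is the first (scalar) component of $q_i$, $q_{0,12}$ is the first component of $Q(q_1)q_2$, and $\bar 1=[1,0,0,0]^T$. Then $T\mathcal{S}^3$ is a Lie group under this operation, with identity $e=(\bar 1,0_{4\times1})$ and inverse $g^{-1}=(q^{-1},p^{-1})$ for $g=(q,p)$, where $q^{-1}=[q_0,-\vec q^{\,T}]^T$ and $p^{-1}=[p_0,-\vec p^{\,T}]^T$ (writing $q=[q_0,\vec q^{\,T}]^T$, $p=[p_0,\vec p^{\,T}]^T$).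
   Context: Notation: for $u\in\mathbb{R}^3$, $u^{\wedge}$ is the skew-symmetric matrix with $u^{\wedge}v=u\times v$. For $x=[x_0,\vec x^{\,T}]^T\in\mathbb{R}^4$: $Q(x)=\begin{bmatrix}x_0&-\vec x^{\,T}\\ \vec x& x_0I_3+\vec x^{\wedge}\end{bmatrix}$ and $W(x)=\begin{bmatrix}x_0&-\vec x^{\,T}\\ \vec x& x_0I_3-\vec x^{\wedge}\end{bmatrix}$. For $q_1,q_2\in\mathcal{S}^3$, $Q(q_1)q_2$ is the quaternion product $q_1\otimes q_2\in\mathcal{S}^3$. $T\mathcal{S}^3$ is the tangent bundle of the unit sphere $\mathcal{S}^3\subset\mathbb{R}^4$. *)

theory Defs
  imports "HOL-Analysis.Analysis" "HOL-Algebra.Group"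
begin

text \<open>Vectors x in R^4 are written x = [x0, x1, x2, x3]; in Isabelle x$1 = x0,
  x$2, x$3, x$4 are the components (x$1 is the scalar part).\<close>

definition hat :: "real^3 \<Rightarrow> real^3^3" where
  "hat u = vector [vector [0, -(u$3), u$2],
                   vector [u$3, 0, -(u$1)],
                   vector [-(u$2), u$1, 0]]"

definition vecpart :: "real^4 \<Rightarrow> real^3" where
  "vecpart x = vector [x$2, x$3, x$4]"

text \<open>Q(x) = [[x0, -vec x^T],[vec x, x0 I3 + hat(vec x)]] and
  W(x) = [[x0, -vec x^T],[vec x, x0 I3 - hat(vec x)]], assembled entrywise
  from the block description (indices 2..4 of the 4x4 matrix correspond to 1..3
  of the 3x3 block).\<close>

definition idx3 :: "4 \<Rightarrow> 3" where
  "idx3 i = (if i = 2 then 1 else if i = 3 then 2 else 3)"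

definition Qm :: "real^4 \<Rightarrow> real^4^4" where
  "Qm x = (\<chi> i j.
     if i = 1 \<and> j = 1 then x$1
     else if i = 1 then - (x$j)
     else if j = 1 then x$i
     else (if i = j then x$1 else 0) + hat (vecpart x) $ idx3 i $ idx3 j)"

definition Wm :: "real^4 \<Rightarrow> real^4^4" where
  "Wm x = (\<chi> i j.
     if i = 1 \<and> j = 1 then x$1
     else if i = 1 then - (x$j)
     else if j = 1 then x$i
     else (if i = j then x$1 else 0) - hat (vecpart x) $ idx3 i $ idx3 j)"

definition one4 :: "real^4" where
  "one4 = vector [1, 0, 0, 0]"

definition TS3 :: "((real^4) \<times> (real^4)) set" where
  "TS3 = {(q, p). norm q = 1 \<and> q \<bullet> p = 0}"

definition tmul :: "real \<Rightarrow> ((real^4) \<times> (real^4)) \<Rightarrow> ((real^4) \<times> (real^4)) \<Rightarrow> ((real^4) \<times> (real^4))" where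
  "tmul lam g1 g2 = (case g1 of (q1, p1) \<Rightarrow> case g2 of (q2, p2) \<Rightarrow>
     (Qm q1 *v q2,
      Qm q1 *v p2 + Wm q2 *v p1
      + lam *\<^sub>R (Qm q1 *v ((q2$1) *\<^sub>R q2 - one4))
      + lam *\<^sub>R (Wm q2 *v ((q1$1) *\<^sub>R q1 - one4))
      - lam *\<^sub>R (((Qm q1 *v q2)$1) *\<^sub>R (Qm q1 *v q2) - one4)))"

definition conj4 :: "real^4 \<Rightarrow> real^4" where
  "conj4 x = vector [x$1, -(x$2), -(x$3), -(x$4)]"

definition tinv :: "((real^4) \<times> (real^4)) \<Rightarrow> ((real^4) \<times> (real^4))" where
  "tinv g = (case g of (q, p) \<Rightarrow> (conj4 q, conj4 p))"

definition TS3_group :: "real \<Rightarrow> ((real^4) \<times> (real^4)) monoid" where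
  "TS3_group lam = \<lparr>carrier = TS3, mult = tmul lam, one = (one4, 0)\<rparr>"

text \<open>C-infinity smoothness of a real-valued function on a Euclidean space:
  differentiable everywhere, and every partial derivative is again smooth
  (greatest fixed point, i.e. derivatives of all orders exist).\<close>
coinductive smooth_real :: "('a::euclidean_space \<Rightarrow> real) \<Rightarrow> bool" where
  "(\<And>x. f differentiable (at x)) \<Longrightarrow>
   (\<And>b. b \<in> Basis \<Longrightarrow> smooth_real (\<lambda>x. frechet_derivative f (at x) b)) \<Longrightarrow>
   smooth_real f"

definition smooth_map :: "('a::euclidean_space \<Rightarrow> 'b::euclidean_space) \<Rightarrow> bool" where
  "smooth_map F \<longleftrightarrow> (\<forall>b\<in>Basis. smooth_real (\<lambda>x. F x \<bullet> b))"

end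

theory Submission
  imports Defs
begin

(*
  Put u = p + lam (q0 q - 1) for (q, p) in TS3. In the variables (q, u) the product becomes
  (q1 q2, q1 u2 + u1 q2): the shift (q, p) |-> (q, u) is a bijection of TS3 onto itself
  (because q . (q0 q - 1) = 0 for unit q) which turns the given law into the product of unit
  dual quaternions q + eps u. That product is associative, has unit (1, 0) and inverse
  (conj q, conj u), since conj q u + conj u q = 2 (q . u) = 0; conjugation commutes with the
  shift. The product and the inverse are polynomial maps, and polynomials are smooth because
  their partial derivatives are again polynomials.
*)

definition quat_mult :: "real^4 \<Rightarrow> real^4 \<Rightarrow> real^4" (infixl \<open>\<odot>\<close> 70) where
  "x \<odot> y = vector [x$1*y$1 - x$2*y$2 - x$3*y$3 - x$4*y$4,
                   x$1*y$2 + x$2*y$1 + x$3*y$4 - x$4*y$3,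
                   x$1*y$3 + x$3*y$1 + x$4*y$2 - x$2*y$4,
                   x$1*y$4 + x$4*y$1 + x$2*y$3 - x$3*y$2]"

lemma vector_4 [simp]:
  "(vector [a, b, c, d] :: 'a::zero^4) $ 1 = a"
  "(vector [a, b, c, d] :: 'a::zero^4) $ 2 = b"
  "(vector [a, b, c, d] :: 'a::zero^4) $ 3 = c"
  "(vector [a, b, c, d] :: 'a::zero^4) $ 4 = d"
  by (simp_all add: vector_def)

lemma Qm_mult_vec: "Qm x *v y = x \<odot> y"
  unfolding vec_eq_iff forall_4
  by (simp add: Qm_def quat_mult_def matrix_vector_mult_def sum_4 hat_def vecpart_def idx3_def
      algebra_simps)

lemma Wm_mult_vec: "Wm x *v y = y \<odot> x"
  unfolding vec_eq_iff forall_4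
  by (simp add: Wm_def quat_mult_def matrix_vector_mult_def sum_4 hat_def vecpart_def idx3_def
      algebra_simps)

lemma quat_mult_assoc: "x \<odot> y \<odot> z = x \<odot> (y \<odot> z)"
  unfolding vec_eq_iff forall_4 by (simp add: quat_mult_def algebra_simps)

lemma quat_mult_one_left [simp]: "one4 \<odot> x = x"
  unfolding vec_eq_iff forall_4 by (simp add: quat_mult_def one4_def)

lemma quat_mult_zero_left [simp]: "0 \<odot> x = 0"
  unfolding vec_eq_iff forall_4 by (simp add: quat_mult_def)

lemma quat_mult_add_left: "(x + y) \<odot> z = x \<odot> z + y \<odot> z"
  and quat_mult_add_right: "z \<odot> (x + y) = z \<odot> x + z \<odot> y"
  and quat_mult_diff_left: "(x - y) \<odot> z = x \<odot> z - y \<odot> z"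
  and quat_mult_diff_right: "z \<odot> (x - y) = z \<odot> x - z \<odot> y"
  and quat_mult_scaleR_left: "(c *\<^sub>R x) \<odot> z = c *\<^sub>R (x \<odot> z)"
  and quat_mult_scaleR_right: "z \<odot> (c *\<^sub>R x) = c *\<^sub>R (z \<odot> x)"
  unfolding vec_eq_iff forall_4 by (simp_all add: quat_mult_def algebra_simps)

lemmas quat_mult_distrib =
  quat_mult_add_left quat_mult_add_right quat_mult_diff_left quat_mult_diff_right
  quat_mult_scaleR_left quat_mult_scaleR_right

lemma inner_quat_mult_left: "(x \<odot> y) \<bullet> (x \<odot> z) = (x \<bullet> x) * (y \<bullet> z)"
  and inner_quat_mult_right: "(y \<odot> x) \<bullet> (z \<odot> x) = (x \<bullet> x) * (y \<bullet> z)"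
  by (simp_all add: quat_mult_def inner_vec_def sum_4 algebra_simps)

lemma conj4_quat_mult_self: "conj4 x \<odot> x = (x \<bullet> x) *\<^sub>R one4"
  unfolding vec_eq_iff forall_4
  by (simp add: quat_mult_def conj4_def one4_def inner_vec_def sum_4 power2_eq_square)

lemma conj4_quat_mult_add_commute: "conj4 x \<odot> y + conj4 y \<odot> x = (2 * (x \<bullet> y)) *\<^sub>R one4"
  unfolding vec_eq_iff forall_4
  by (simp add: quat_mult_def conj4_def one4_def inner_vec_def sum_4 algebra_simps)

lemma conj4_nth_1 [simp]: "conj4 x $ 1 = x $ 1"
  by (simp add: conj4_def)

lemma conj4_one4 [simp]: "conj4 one4 = one4"
  and conj4_add: "conj4 (x + y) = conj4 x + conj4 y"
  and conj4_diff: "conj4 (x - y) = conj4 x - conj4 y"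
  and conj4_scaleR: "conj4 (c *\<^sub>R x) = c *\<^sub>R conj4 x"
  unfolding vec_eq_iff forall_4 by (simp_all add: conj4_def one4_def)

lemma inner_conj4_conj4 [simp]: "conj4 x \<bullet> conj4 y = x \<bullet> y"
  by (simp add: conj4_def inner_vec_def sum_4)

lemma TS3_iff: "(q, p) \<in> TS3 \<longleftrightarrow> q \<bullet> q = 1 \<and> q \<bullet> p = 0"
  by (simp add: TS3_def norm_eq_1)

fun dual_mult :: "((real^4) \<times> (real^4)) \<Rightarrow> ((real^4) \<times> (real^4)) \<Rightarrow> ((real^4) \<times> (real^4))" where
  "dual_mult (q1, u1) (q2, u2) = (q1 \<odot> q2, q1 \<odot> u2 + u1 \<odot> q2)"

lemma dual_mult_assoc: "dual_mult (dual_mult g h) k = dual_mult g (dual_mult h k)"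
  by (cases g, cases h, cases k) (simp add: quat_mult_assoc quat_mult_distrib algebra_simps)

lemma dual_mult_one_left: "dual_mult (one4, 0) g = g"
  by (cases g) simp

lemma dual_mult_closed:
  assumes "g \<in> TS3" "h \<in> TS3"
  shows "dual_mult g h \<in> TS3"
  using assms
  by (cases g, cases h)
     (simp add: TS3_iff inner_add_right inner_quat_mult_left inner_quat_mult_right inner_commute)

lemma dual_mult_tinv_left:
  assumes "g \<in> TS3"
  shows "dual_mult (tinv g) g = (one4, 0)"
  using assms
  by (cases g) (simp add: tinv_def TS3_iff conj4_quat_mult_self conj4_quat_mult_add_commute)

definition offset :: "real \<Rightarrow> real^4 \<Rightarrow> real^4" where
  "offset lam q = lam *\<^sub>R ((q$1) *\<^sub>R q - one4)"

fun dual_shift :: "real \<Rightarrow> ((real^4) \<times> (real^4)) \<Rightarrow> ((real^4) \<times> (real^4))" where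
  "dual_shift lam (q, p) = (q, p + offset lam q)"

lemma inj_dual_shift: "inj (dual_shift lam)"
proof (rule injI)
  fix g h
  show "dual_shift lam g = dual_shift lam h \<Longrightarrow> g = h"
    by (cases g, cases h) simp
qed

lemma inner_offset: "q \<bullet> offset lam q = lam * q$1 * (q \<bullet> q - 1)"
  by (simp add: offset_def one4_def inner_vec_def sum_4 algebra_simps)

lemma dual_shift_in_TS3_iff: "dual_shift lam g \<in> TS3 \<longleftrightarrow> g \<in> TS3"
  by (cases g) (auto simp: TS3_iff inner_add_right inner_offset)

lemma offset_one4 [simp]: "offset lam one4 = 0"
  by (simp add: offset_def one4_def)

lemma dual_shift_tinv: "dual_shift lam (tinv g) = tinv (dual_shift lam g)"
  by (cases g) (simp add: tinv_def offset_def conj4_add conj4_diff conj4_scaleR)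

lemma tmul_Pair:
  "tmul lam (q1, p1) (q2, p2) =
    (q1 \<odot> q2, q1 \<odot> p2 + p1 \<odot> q2 + q1 \<odot> offset lam q2 + offset lam q1 \<odot> q2 - offset lam (q1 \<odot> q2))"
  by (simp add: tmul_def offset_def Qm_mult_vec Wm_mult_vec quat_mult_scaleR_left quat_mult_scaleR_right)

lemma dual_shift_tmul: "dual_shift lam (tmul lam g h) = dual_mult (dual_shift lam g) (dual_shift lam h)"
  by (cases g, cases h) (simp add: tmul_Pair quat_mult_distrib)

lemma tmul_eq_iff_dual_mult: "tmul lam g h = k \<longleftrightarrow> dual_mult (dual_shift lam g) (dual_shift lam h) = dual_shift lam k"
  unfolding dual_shift_tmul[symmetric] by (rule inj_eq[OF inj_dual_shift, symmetric])

lemma tmul_closed: "g \<in> TS3 \<Longrightarrow> h \<in> TS3 \<Longrightarrow> tmul lam g h \<in> TS3"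
  by (metis dual_mult_closed dual_shift_in_TS3_iff dual_shift_tmul)

lemma tmul_assoc: "tmul lam (tmul lam g h) k = tmul lam g (tmul lam h k)"
  by (simp add: tmul_eq_iff_dual_mult dual_shift_tmul dual_mult_assoc)

lemma tmul_one_left: "tmul lam (one4, 0) g = g"
  by (simp add: tmul_eq_iff_dual_mult dual_mult_one_left)

lemma tmul_tinv_left: "g \<in> TS3 \<Longrightarrow> tmul lam (tinv g) g = (one4, 0)"
  by (simp add: tmul_eq_iff_dual_mult dual_shift_tinv dual_mult_tinv_left dual_shift_in_TS3_iff)

lemma tinv_in_TS3: "g \<in> TS3 \<Longrightarrow> tinv g \<in> TS3"
  by (cases g) (simp add: tinv_def TS3_iff)

lemma one_in_TS3: "(one4, 0) \<in> TS3"
  by (simp add: TS3_iff one4_def inner_vec_def sum_4)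

lemma group_TS3_group: "group (TS3_group lam)"
proof (rule groupI)
  fix g h k
  show "g \<in> carrier (TS3_group lam) \<Longrightarrow> h \<in> carrier (TS3_group lam) \<Longrightarrow>
      g \<otimes>\<^bsub>TS3_group lam\<^esub> h \<in> carrier (TS3_group lam)"
    by (simp add: TS3_group_def tmul_closed)
  show "g \<otimes>\<^bsub>TS3_group lam\<^esub> h \<otimes>\<^bsub>TS3_group lam\<^esub> k =
      g \<otimes>\<^bsub>TS3_group lam\<^esub> (h \<otimes>\<^bsub>TS3_group lam\<^esub> k)"
    by (simp add: TS3_group_def tmul_assoc)
  show "\<one>\<^bsub>TS3_group lam\<^esub> \<otimes>\<^bsub>TS3_group lam\<^esub> g = g"
    by (simp add: TS3_group_def tmul_one_left)
  show "g \<in> carrier (TS3_group lam) \<Longrightarrow>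
      \<exists>h \<in> carrier (TS3_group lam). h \<otimes>\<^bsub>TS3_group lam\<^esub> g = \<one>\<^bsub>TS3_group lam\<^esub>"
    by (auto simp: TS3_group_def intro!: bexI[of _ "tinv g"] tinv_in_TS3 tmul_tinv_left)
qed (simp add: TS3_group_def one_in_TS3)

lemma TS3_group_inv: "g \<in> TS3 \<Longrightarrow> inv\<^bsub>TS3_group lam\<^esub> g = tinv g"
  by (rule group.inv_equality[OF group_TS3_group])
     (simp_all add: TS3_group_def tmul_tinv_left tinv_in_TS3)

lemma real_polynomial_function_has_derivative:
  "real_polynomial_function f \<Longrightarrow>
    \<exists>D. (\<forall>x. (f has_derivative D x) (at x)) \<and> (\<forall>h. real_polynomial_function (\<lambda>x. D x h))"
proof (induction rule: real_polynomial_function.induct)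
  case (linear f)
  then show ?case
    by (intro exI[of _ "\<lambda>x. f"]) (auto intro: bounded_linear_imp_has_derivative)
next
  case (const c)
  then show ?case
    by (intro exI[of _ "\<lambda>x h. 0"]) auto
next
  case (add f g)
  then obtain Df Dg where "\<forall>x. (f has_derivative Df x) (at x)" "\<forall>h. real_polynomial_function (\<lambda>x. Df x h)"
    "\<forall>x. (g has_derivative Dg x) (at x)" "\<forall>h. real_polynomial_function (\<lambda>x. Dg x h)"
    by blast
  then show ?case
    by (intro exI[of _ "\<lambda>x h. Df x h + Dg x h"]) (auto intro: has_derivative_add)
next
  case (mult f g)
  then obtain Df Dg where D: "\<forall>x. (f has_derivative Df x) (at x)" "\<forall>h. real_polynomial_function (\<lambda>x. Df x h)"
    "\<forall>x. (g has_derivative Dg x) (at x)" "\<forall>h. real_polynomial_function (\<lambda>x. Dg x h)"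
    by blast
  have "real_polynomial_function (\<lambda>x. f x * Dg x h + Df x h * g x)" for h
    using mult.hyps D by (intro real_polynomial_function.intros(3,4)) auto
  with D show ?case
    by (intro exI[of _ "\<lambda>x h. f x * Dg x h + Df x h * g x"]) (auto intro: has_derivative_mult)
qed

lemma real_polynomial_function_frechet_derivative:
  assumes "real_polynomial_function f"
  shows "real_polynomial_function (\<lambda>x. frechet_derivative f (at x) h)"
proof -
  obtain D where D: "\<And>x. (f has_derivative D x) (at x)" "\<And>h. real_polynomial_function (\<lambda>x. D x h)"
    using real_polynomial_function_has_derivative[OF assms] by blast
  have "frechet_derivative f (at x) = D x" for x
    using frechet_derivative_at[OF D(1)] by simp
  with D(2) show ?thesis
    by simp
qed

lemma smooth_real_real_polynomial_function: "real_polynomial_function f \<Longrightarrow> smooth_real f"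
  by (coinduction arbitrary: f rule: smooth_real.coinduct)
     (auto intro: differentiable_at_real_polynomial_function real_polynomial_function_frechet_derivative)

lemma smooth_map_polynomial_function: "polynomial_function F \<Longrightarrow> smooth_map F"
  by (simp add: smooth_map_def polynomial_function_iff_Basis_inner smooth_real_real_polynomial_function)

lemma polynomial_function_vec_nth: "polynomial_function f \<Longrightarrow> polynomial_function (\<lambda>x. f x $ i)"
  using polynomial_function_compose[OF _ polynomial_function_bounded_linear[OF bounded_linear_vec_nth]]
  by (simp add: o_def)

lemma polynomial_function_vec_iff:
  "polynomial_function (f :: 'a::real_normed_vector \<Rightarrow> real^'n) \<longleftrightarrow>
    (\<forall>i. real_polynomial_function (\<lambda>x. f x $ i))"
proof
  assume "polynomial_function f"
  then show "\<forall>i. real_polynomial_function (\<lambda>x. f x $ i)"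
    by (simp add: real_polynomial_function_eq polynomial_function_vec_nth)
next
  assume "\<forall>i. real_polynomial_function (\<lambda>x. f x $ i)"
  then show "polynomial_function f"
    by (simp add: polynomial_function_iff_Basis_inner Basis_vec_def cart_eq_inner_axis[symmetric])
qed

lemma polynomial_function_Pair:
  assumes "polynomial_function f" "polynomial_function g"
  shows "polynomial_function (\<lambda>x. (f x, g x))"
proof -
  have "polynomial_function ((\<lambda>y. (y, 0)) \<circ> f)"
    by (rule polynomial_function_compose[OF assms(1) polynomial_function_bounded_linear])
       (intro bounded_linear_Pair bounded_linear_ident bounded_linear_zero)
  moreover have "polynomial_function ((\<lambda>z. (0, z)) \<circ> g)"
    by (rule polynomial_function_compose[OF assms(2) polynomial_function_bounded_linear])
       (intro bounded_linear_Pair bounded_linear_ident bounded_linear_zero)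
  ultimately have "polynomial_function (\<lambda>x. (f x, 0) + (0, g x))"
    unfolding o_def by (rule polynomial_function_add)
  then show ?thesis
    by simp
qed

lemma polynomial_function_fst: "polynomial_function f \<Longrightarrow> polynomial_function (\<lambda>x. fst (f x))"
  and polynomial_function_snd: "polynomial_function f \<Longrightarrow> polynomial_function (\<lambda>x. snd (f x))"
  using polynomial_function_compose[OF _ polynomial_function_bounded_linear[OF bounded_linear_fst]]
    polynomial_function_compose[OF _ polynomial_function_bounded_linear[OF bounded_linear_snd]]
  by (simp_all add: o_def)

lemma polynomial_function_quat_mult:
  assumes "polynomial_function f" "polynomial_function g"
  shows "polynomial_function (\<lambda>x. f x \<odot> g x)"
proof -
  have "real_polynomial_function (\<lambda>x. f x $ i)" "real_polynomial_function (\<lambda>x. g x $ i)" for i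
    using assms by (simp_all add: polynomial_function_vec_iff)
  then show ?thesis
    unfolding polynomial_function_vec_iff forall_4
    by (simp add: quat_mult_def real_polynomial_function_diff real_polynomial_function.intros(3,4))
qed

lemma polynomial_function_conj4:
  assumes "polynomial_function f"
  shows "polynomial_function (\<lambda>x. conj4 (f x))"
proof -
  have "real_polynomial_function (\<lambda>x. f x $ i)" for i
    using assms by (simp add: polynomial_function_vec_iff)
  then show ?thesis
    unfolding polynomial_function_vec_iff forall_4 by (simp add: conj4_def real_polynomial_function_minus)
qed

lemma polynomial_function_offset: "polynomial_function f \<Longrightarrow> polynomial_function (\<lambda>x. offset lam (f x))"
  unfolding offset_def by (intro polynomial_function_cmul polynomial_function_diff polynomial_function_mult
      polynomial_function_vec_nth polynomial_function_const)

lemma smooth_map_tinv: "smooth_map tinv"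
proof -
  have "tinv = (\<lambda>g. (conj4 (fst g), conj4 (snd g)))"
    by (auto simp: tinv_def)
  moreover have "polynomial_function (\<lambda>g. (conj4 (fst g), conj4 (snd g)))"
    by (intro polynomial_function_Pair polynomial_function_conj4 polynomial_function_fst
        polynomial_function_snd polynomial_function_id)
  ultimately show ?thesis
    by (simp add: smooth_map_polynomial_function)
qed

lemma smooth_map_tmul: "smooth_map (\<lambda>(g, h). tmul lam g h)"
proof -
  have "(\<lambda>(g, h). tmul lam g h) = (\<lambda>x. (fst (fst x) \<odot> fst (snd x),
      fst (fst x) \<odot> snd (snd x) + snd (fst x) \<odot> fst (snd x)
      + fst (fst x) \<odot> offset lam (fst (snd x)) + offset lam (fst (fst x)) \<odot> fst (snd x)
      - offset lam (fst (fst x) \<odot> fst (snd x))))"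
    by (auto simp: tmul_Pair)
  moreover have "polynomial_function \<dots>"
    by (intro polynomial_function_Pair polynomial_function_quat_mult polynomial_function_add
        polynomial_function_diff polynomial_function_offset polynomial_function_fst
        polynomial_function_snd polynomial_function_id)
  ultimately show ?thesis
    by (simp add: smooth_map_polynomial_function)
qed

theorem lemma3:
  fixes lam :: real
  assumes "lam > 0"
  shows "group (TS3_group lam)
    \<and> \<one>\<^bsub>TS3_group lam\<^esub> = (one4, 0)
    \<and> (\<forall>g \<in> TS3. inv\<^bsub>TS3_group lam\<^esub> g = tinv g)
    \<and> smooth_map (\<lambda>(g1, g2). tmul lam g1 g2)
    \<and> smooth_map tinv"
  using group_TS3_group TS3_group_inv smooth_map_tmul smooth_map_tinv
  by (simp add: TS3_group_def)

end
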